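(* Assume $\operatorname{tr}(CH^{-1})>0$ and $\theta_0\ne\theta_*$. Let $N\ge1$, $\alpha=\min\Big\{\frac{\|\theta_0-\theta_*\|}{\sqrt{L\operatorname{tr}(CH^{-1})}\,N},\frac1L\Big\}$ and $\beta=\min\{N\alpha,1/L\}$, and run the noisy algorithm with these parameters. Then $$\mathbb{E}f(\theta_N)-f(\theta_* )\le\max\Big\{\frac{5\operatorname{tr}(CH^{-1})}{N},\ \frac{5\sqrt{\operatorname{tr}(CH^{-1})L}\,\|\theta_0-\theta_*\|}{N},\ \frac{2L\|\theta_0-\theta_*\|^2}{N^2}\Big\}.$$
   Context: Let $H\in\mathbb{R}^{d\times d}$ be symmetric positive definite with largest eigenvalue $L$, $q\in\mathbb{R}^d$, $f(\theta)=\frac12\langle\theta,H\theta\rangle-\langle q,\theta\rangle$, $\theta_*=H^{-1}q$. Let $(\varepsilon_n)_{n\ge2}$ be random vectors in $\mathbb{R}^d$ with $\mathbb{E}\varepsilon_n=0$, $\mathbb{E}[\varepsilon_n\varepsilon_m^\top]=0$ for $n\neq m$, and $\mathbb{E}[\varepsilon_n\varepsilon_n^\top]=C$ for all $n$, for a fixed positive semidefinite $C$. The noisy algorithm with parameters $\alpha,\beta$: given deterministic $\theta_0$, set $\theta_1=\theta_0$ and for $n\ge1$ $$\theta_{n+1}=\frac{2n}{n+1}\theta_n-\frac{n-1}{n+1}\theta_{n-1}-\frac{1}{n+1}\Big(n(\alpha+\beta)H(\theta_n-\theta_* )-(n-1)\beta H(\theta_{n-1}-\theta_* )-(n\alpha+\beta)\varepsilon_{n+1}\Big).$$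 *)

theory Defs
  imports "HOL-Probability.Probability"
begin

definition quad_obj :: "real^'d^'d \<Rightarrow> real^'d \<Rightarrow> real^'d \<Rightarrow> real" where
  "quad_obj H q th = (1/2) * (th \<bullet> (H *v th)) - q \<bullet> th"

definition is_largest_eigenvalue :: "real^'d^'d \<Rightarrow> real \<Rightarrow> bool" where
  "is_largest_eigenvalue H L \<longleftrightarrow>
     (\<exists>v. v \<noteq> 0 \<and> H *v v = L *\<^sub>R v) \<and>
     (\<forall>mu v. v \<noteq> 0 \<and> H *v v = mu *\<^sub>R v \<longrightarrow> mu \<le> L)"

fun noisy_alg :: "real^'d^'d \<Rightarrow> real^'d \<Rightarrow> real \<Rightarrow> real \<Rightarrow> real^'d \<Rightarrow> (nat \<Rightarrow> real^'d)
                  \<Rightarrow> nat \<Rightarrow> real^'d" where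
  "noisy_alg H ts a b th0 e 0 = th0"
| "noisy_alg H ts a b th0 e (Suc 0) = th0"
| "noisy_alg H ts a b th0 e (Suc (Suc n)) =
     (2 * real (Suc n) / real (Suc n + 1)) *\<^sub>R noisy_alg H ts a b th0 e (Suc n)
     - (real n / real (Suc n + 1)) *\<^sub>R noisy_alg H ts a b th0 e n
     - (1 / real (Suc n + 1)) *\<^sub>R
         ((real (Suc n) * (a + b)) *\<^sub>R (H *v (noisy_alg H ts a b th0 e (Suc n) - ts))
          - (real n * b) *\<^sub>R (H *v (noisy_alg H ts a b th0 e n - ts))
          - (real (Suc n) * a + b) *\<^sub>R e (Suc (Suc n)))"

end

theory Submission
  imports Defs
begin

text \<open>Along a unit eigenvector \<open>b\<close> of \<open>H\<close> with eigenvalue \<open>\<lambda>\<close>, the rescaled error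
  \<open>d\<^sub>n = n (b \<bullet> (\<theta>\<^sub>n - \<theta>\<^sub>*))\<close> obeys the constant-coefficient recurrence
  \<open>d\<^sub>n\<^sub>+\<^sub>2 = (2 - \<alpha>\<lambda> - \<beta>\<lambda>) d\<^sub>n\<^sub>+\<^sub>1 - (1 - \<beta>\<lambda>) d\<^sub>n + ((n+1)\<alpha> + \<beta>) (b \<bullet> \<epsilon>\<^sub>n\<^sub>+\<^sub>2)\<close>,
  so \<open>d\<^sub>N\<close> is the impulse response \<open>G\<^sub>N\<close> of this recurrence times \<open>d\<^sub>1\<close> plus a convolution of
  \<open>G\<close> with the noise. As the noise is centred and uncorrelated, \<open>E d\<^sub>N\<^sup>2\<close> is the squared bias term
  plus \<open>b \<bullet> C b\<close> times a weighted sum of the \<open>G\<^sub>k\<^sup>2\<close>. Two discrete Lyapunov functions of the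
  homogeneous recurrence (\<open>impulse_energy\<close> and \<open>impulse_potential\<close>) give
  \<open>\<alpha>\<lambda> G\<^sub>n\<^sup>2 \<le> 1\<close> and \<open>\<alpha>\<beta>\<lambda>\<^sup>2 \<Sum> G\<^sub>n\<^sup>2 \<le> 1\<close> whenever \<open>0 < \<alpha> \<le> \<beta> \<le> 1/\<lambda>\<close>.
  Summing over an orthonormal eigenbasis, which exists by maximising the Rayleigh quotient, bounds
  \<open>E f(\<theta>\<^sub>N) - f(\<theta>\<^sub>*)\<close> by \<open>(\<parallel>\<theta>\<^sub>0 - \<theta>\<^sub>*\<parallel>\<^sup>2/\<alpha> + (N\<alpha> + \<beta>)\<^sup>2/(\<alpha>\<beta>) tr(C H\<^sup>-\<^sup>1)) / (2N\<^sup>2)\<close>;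
  the prescribed step sizes balance these two terms.\<close>

section \<open>The impulse response of a two-step recurrence\<close>

fun impulse_response :: "real \<Rightarrow> real \<Rightarrow> nat \<Rightarrow> real" where
  "impulse_response a b 0 = 0"
| "impulse_response a b (Suc 0) = 1"
| "impulse_response a b (Suc (Suc n)) =
     (2 - a - b) * impulse_response a b (Suc n) - (1 - b) * impulse_response a b n"

definition impulse_energy :: "real \<Rightarrow> real \<Rightarrow> nat \<Rightarrow> real" where
  "impulse_energy a b m = a * (impulse_response a b (Suc m))^2
     + (1 - b) * (impulse_response a b (Suc m) - impulse_response a b m)^2"

lemma impulse_energy_Suc_le:
  assumes "a \<le> 2 * b" "b \<le> 1"
  shows "impulse_energy a b (Suc m) \<le> impulse_energy a b m"
proof -
  define x where "x = impulse_response a b (Suc m)"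
  define u where "u = impulse_response a b (Suc m) - impulse_response a b m"
  define u' where "u' = (1 - b) * u - a * x"
  have succ: "impulse_response a b (Suc (Suc m)) = x + u'"
    by (simp add: x_def u_def u'_def algebra_simps)
  have prev: "impulse_response a b m = x - u"
    by (simp add: x_def u_def)
  have "impulse_energy a b (Suc m) - impulse_energy a b m = - (1 - b) * (u - u')^2 - (2 * b - a) * u'^2"
    unfolding impulse_energy_def succ prev x_def[symmetric]
    by (simp add: u'_def power2_eq_square algebra_simps)
  moreover have "(1 - b) * (u - u')^2 \<ge> 0" "(2 * b - a) * u'^2 \<ge> 0"
    using assms by auto
  ultimately show ?thesis by linarith
qed

lemma impulse_response_sq_le:
  assumes "0 \<le> a" "a \<le> b" "b \<le> 1"
  shows "a * (impulse_response a b m)^2 \<le> 1"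
proof (cases m)
  case 0
  then show ?thesis by simp
next
  case (Suc k)
  have "impulse_energy a b k \<le> impulse_energy a b 0"
  proof (induction k)
    case (Suc k)
    then show ?case using impulse_energy_Suc_le[of a b k] assms by linarith
  qed simp
  moreover have "impulse_energy a b 0 = 1 + a - b"
    by (simp add: impulse_energy_def)
  moreover have "a * (impulse_response a b m)^2 \<le> impulse_energy a b k"
    using assms unfolding impulse_energy_def Suc by simp
  ultimately show ?thesis using assms by linarith
qed

definition impulse_potential :: "real \<Rightarrow> real \<Rightarrow> real \<Rightarrow> real \<Rightarrow> real" where
  "impulse_potential a b x y = (2 - b) * x^2 - 2 * (2 - a - b) * (1 - b) * x * y + (2 - b) * (1 - b)^2 * y^2"

lemma impulse_potential_nonneg:
  assumes "0 \<le> a" "a \<le> b" "b \<le> 1"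
  shows "impulse_potential a b x y \<ge> 0"
proof -
  have "(2 - b) * impulse_potential a b x y
      = ((2 - b) * x - (2 - a - b) * (1 - b) * y)^2 + (1 - b)^2 * (a * (4 - a - 2 * b)) * y^2"
    unfolding impulse_potential_def by (simp add: power2_eq_square algebra_simps)
  moreover have "(1 - b)^2 * (a * (4 - a - 2 * b)) * y^2 \<ge> 0"
    using assms by simp
  ultimately have "(2 - b) * impulse_potential a b x y \<ge> 0"
    by (metis add_nonneg_nonneg zero_le_power2)
  moreover have "2 - b > 0" using assms by simp
  ultimately show ?thesis by (simp add: zero_le_mult_iff)
qed

lemma impulse_potential_step:
  "impulse_potential a b x y - impulse_potential a b ((2 - a - b) * x - (1 - b) * y) x
     = a * b * (4 - a - 2 * b) * x^2"
  unfolding impulse_potential_def by (simp add: power2_eq_square algebra_simps)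

lemma impulse_response_sum_sq_eq:
  "a * b * (4 - a - 2 * b) * (\<Sum>m\<in>{1..n}. (impulse_response a b m)^2)
     + impulse_potential a b (impulse_response a b (Suc n)) (impulse_response a b n) = 2 - b"
proof (induction n)
  case 0
  then show ?case by (simp add: impulse_potential_def)
next
  case (Suc n)
  then show ?case
    using impulse_potential_step[of a b "impulse_response a b (Suc n)" "impulse_response a b n"]
    by (simp add: algebra_simps)
qed

lemma impulse_response_sum_sq_le:
  assumes "0 < a" "a \<le> b" "b \<le> 1"
  shows "a * b * (\<Sum>m\<in>{1..n}. (impulse_response a b m)^2) \<le> 1"
proof -
  define S where "S = a * b * (\<Sum>m\<in>{1..n}. (impulse_response a b m)^2)"
  have "S * (4 - a - 2 * b) = a * b * (4 - a - 2 * b) * (\<Sum>m\<in>{1..n}. (impulse_response a b m)^2)"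
    unfolding S_def by (simp add: algebra_simps)
  then have "S * (4 - a - 2 * b) \<le> 2 - b"
    using impulse_response_sum_sq_eq[of a b n]
      impulse_potential_nonneg[of a b "impulse_response a b (Suc n)" "impulse_response a b n"] assms
    by linarith
  moreover have "S \<ge> 0" using assms unfolding S_def by (simp add: sum_nonneg)
  moreover have "4 - a - 2 * b \<ge> 2 - b" "2 - b > 0" using assms by simp_all
  ultimately have "S * (2 - b) \<le> 1 * (2 - b)"
    by (smt (verit) mult_left_mono)
  with \<open>2 - b > 0\<close> show ?thesis unfolding S_def by simp
qed

lemma impulse_response_weighted_sum_sq_le:
  assumes \<alpha>: "0 < \<alpha>" "\<alpha> \<le> \<beta>" and lam: "0 < lam" "\<beta> * lam \<le> 1"
  shows "lam * (\<Sum>j\<in>{1..<N}. (impulse_response (\<alpha> * lam) (\<beta> * lam) (N - j) * (real j * \<alpha> + \<beta>))^2)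
           \<le> (real N * \<alpha> + \<beta>)^2 / (\<alpha> * \<beta> * lam)"
proof -
  let ?G = "impulse_response (\<alpha> * lam) (\<beta> * lam)"
  have \<beta>: "\<beta> > 0" using \<alpha> by simp
  have weight: "(real j * \<alpha> + \<beta>)^2 \<le> (real N * \<alpha> + \<beta>)^2" if "j \<in> {1..<N}" for j
    using that \<alpha> \<beta> by (intro power_mono add_right_mono mult_right_mono) auto
  have reflect: "(\<Sum>j\<in>{1..<N}. (?G (N - j))^2) \<le> (\<Sum>m\<in>{1..N}. (?G m)^2)"
  proof -
    have "inj_on (\<lambda>j. N - j) {1..<N}" by (auto simp: inj_on_def)
    then have "(\<Sum>j\<in>{1..<N}. (?G (N - j))^2) = (\<Sum>m\<in>(\<lambda>j. N - j) ` {1..<N}. (?G m)^2)"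
      by (simp add: sum.reindex o_def)
    also have "\<dots> \<le> (\<Sum>m\<in>{1..N}. (?G m)^2)"
      by (rule sum_mono2) auto
    finally show ?thesis .
  qed
  have "(\<Sum>j\<in>{1..<N}. (?G (N - j) * (real j * \<alpha> + \<beta>))^2) \<le> (\<Sum>j\<in>{1..<N}. (real N * \<alpha> + \<beta>)^2 * (?G (N - j))^2)"
    using weight by (intro sum_mono) (auto simp: power_mult_distrib mult.commute intro: mult_right_mono)
  also have "\<dots> \<le> (real N * \<alpha> + \<beta>)^2 * (\<Sum>m\<in>{1..N}. (?G m)^2)"
    using reflect by (simp add: sum_distrib_left[symmetric] mult_left_mono)
  also have "\<dots> \<le> (real N * \<alpha> + \<beta>)^2 * (1 / ((\<alpha> * lam) * (\<beta> * lam)))"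
    using impulse_response_sum_sq_le[of "\<alpha> * lam" "\<beta> * lam" N] \<alpha> \<beta> lam
    by (intro mult_left_mono) (simp_all add: field_simps mult_right_mono)
  finally have "lam * (\<Sum>j\<in>{1..<N}. (?G (N - j) * (real j * \<alpha> + \<beta>))^2)
      \<le> lam * ((real N * \<alpha> + \<beta>)^2 * (1 / ((\<alpha> * lam) * (\<beta> * lam))))"
    using lam by (intro mult_left_mono) auto
  also have "\<dots> = (real N * \<alpha> + \<beta>)^2 / (\<alpha> * \<beta> * lam)"
    using lam \<alpha> \<beta> by (simp add: power2_eq_square field_simps)
  finally show ?thesis .
qed

lemma impulse_response_duhamel:
  fixes d g :: "nat \<Rightarrow> real"
  assumes d0: "d 0 = 0"
    and rec: "\<And>n. d (Suc (Suc n)) = (2 - a - b) * d (Suc n) - (1 - b) * d n + g (Suc n)"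
  shows "d n = impulse_response a b n * d 1 + (\<Sum>j\<in>{1..<n}. impulse_response a b (n - j) * g j)"
proof -
  let ?G = "impulse_response a b"
  define S where "S n = (\<Sum>j\<in>{1..<n}. ?G (n - j) * g j)" for n
  have S_rec: "S (Suc (Suc n)) = (2 - a - b) * S (Suc n) - (1 - b) * S n + g (Suc n)" for n
  proof -
    have "S (Suc (Suc n)) = (\<Sum>j\<in>{1..<Suc n}. ?G (Suc (Suc n) - j) * g j) + g (Suc n)"
      unfolding S_def by simp
    also have "(\<Sum>j\<in>{1..<Suc n}. ?G (Suc (Suc n) - j) * g j)
        = (\<Sum>j\<in>{1..<Suc n}. (2 - a - b) * (?G (Suc n - j) * g j) - (1 - b) * (?G (n - j) * g j))"
    proof (rule sum.cong[OF refl])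
      fix j assume "j \<in> {1..<Suc n}"
      then have "Suc (Suc n) - j = Suc (Suc (n - j))" "Suc n - j = Suc (n - j)" by auto
      then show "?G (Suc (Suc n) - j) * g j
          = (2 - a - b) * (?G (Suc n - j) * g j) - (1 - b) * (?G (n - j) * g j)"
        by (simp add: algebra_simps)
    qed
    also have "\<dots> = (2 - a - b) * S (Suc n) - (1 - b) * S n"
      unfolding S_def by (simp add: sum_subtractf sum_distrib_left distrib_left)
    finally show ?thesis .
  qed
  have "d n = ?G n * d 1 + S n \<and> d (Suc n) = ?G (Suc n) * d 1 + S (Suc n)"
  proof (induction n)
    case 0
    then show ?case using d0 by (simp add: S_def)
  next
    case (Suc n)
    then show ?case using rec[of n] S_rec[of n] by (simp add: algebra_simps)
  qed
  then show ?thesis unfolding S_def by simp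
qed

section \<open>Orthonormal eigenbases of symmetric matrices\<close>

lemma symmetric_matrix_inner_commute:
  fixes H :: "real^'n^'n"
  assumes "transpose H = H"
  shows "x \<bullet> (H *v y) = y \<bullet> (H *v x)"
proof -
  have "x \<bullet> (H *v y) = (x v* H) \<bullet> y" by (simp add: dot_lmul_matrix)
  also have "x v* H = H *v x" using vector_transpose_matrix[of x H] assms by simp
  finally show ?thesis by (simp add: inner_commute)
qed

lemma linear_le_quadratic_imp_eq_0:
  fixes c K :: real
  assumes "\<And>t. 2 * t * c \<le> t^2 * K"
  shows "c = 0"
proof (rule ccontr)
  assume "c \<noteq> 0"
  then have c2: "c^2 > 0" by simp
  define D where "D = \<bar>K\<bar> + 1"
  have D: "D > 0" "K \<le> D - 1" unfolding D_def by auto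
  have "2 * c^2 * D / D^2 = 2 * (c / D) * c"
    using D by (simp add: power2_eq_square)
  also have "\<dots> \<le> (c / D)^2 * K" by (rule assms)
  also have "\<dots> = c^2 * K / D^2" by (simp add: power_divide)
  finally have "2 * c^2 * D \<le> c^2 * K"
    using D by (simp add: divide_le_cancel)
  also have "\<dots> \<le> c^2 * (D - 1)" using D by (intro mult_left_mono) auto
  finally have "c^2 * D + c^2 \<le> 0" by (simp add: algebra_simps)
  moreover have "c^2 * D > 0" using c2 D by simp
  ultimately show False using c2 by linarith
qed

lemma rayleigh_maximizer_stationary:
  fixes H :: "real^'n^'n"
  assumes sym: "transpose H = H" and W: "subspace W"
    and x0: "x0 \<in> W" "norm x0 = 1"
    and max: "\<And>y. y \<in> W \<Longrightarrow> norm y = 1 \<Longrightarrow> y \<bullet> (H *v y) \<le> x0 \<bullet> (H *v x0)"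
    and y: "y \<in> W" "y \<bullet> x0 = 0"
  shows "y \<bullet> (H *v x0) = 0"
proof (rule linear_le_quadratic_imp_eq_0)
  fix t :: real
  define lam where "lam = x0 \<bullet> (H *v x0)"
  define v where "v = x0 + t *\<^sub>R y"
  have vv: "v \<bullet> v = 1 + t^2 * (y \<bullet> y)"
    using x0(2) y(2) unfolding v_def
    by (simp add: inner_add_left inner_add_right inner_commute power2_eq_square algebra_simps norm_eq_1)
  then have "v \<bullet> v > 0" by (simp add: add_pos_nonneg)
  moreover have "v \<in> W" unfolding v_def using W x0 y by (simp add: subspace_add subspace_scale)
  ultimately have "(v /\<^sub>R norm v) \<bullet> (H *v (v /\<^sub>R norm v)) \<le> lam"
    using max[of "v /\<^sub>R norm v"] W unfolding lam_def by (simp add: subspace_scale)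
  moreover have "(v /\<^sub>R norm v) \<bullet> (H *v (v /\<^sub>R norm v)) = v \<bullet> (H *v v) / (v \<bullet> v)"
    by (simp add: matrix_vector_mult_scaleR power2_norm_eq_inner[symmetric] power2_eq_square divide_inverse)
  ultimately have "v \<bullet> (H *v v) \<le> lam * (v \<bullet> v)"
    using \<open>v \<bullet> v > 0\<close> by (simp add: divide_le_eq)
  moreover have "v \<bullet> (H *v v) = lam + 2 * t * (y \<bullet> (H *v x0)) + t^2 * (y \<bullet> (H *v y))"
    unfolding v_def lam_def using symmetric_matrix_inner_commute[OF sym, of x0 y]
    by (simp add: matrix_vector_right_distrib matrix_vector_mult_scaleR inner_add_left inner_add_right
        power2_eq_square algebra_simps)
  ultimately show "2 * t * (y \<bullet> (H *v x0)) \<le> t^2 * (lam * (y \<bullet> y) - y \<bullet> (H *v y))"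
    using vv by (simp add: algebra_simps)
qed

lemma symmetric_matrix_orthogonal_eigenvector:
  fixes H :: "real^'n^'n"
  assumes sym: "transpose H = H"
    and B: "finite B" "card B < CARD('n)" "\<And>b. b \<in> B \<Longrightarrow> \<exists>\<mu>. H *v b = \<mu> *\<^sub>R b"
  obtains x where "norm x = 1" "\<And>b. b \<in> B \<Longrightarrow> orthogonal b x" "\<exists>\<mu>. H *v x = \<mu> *\<^sub>R x"
proof -
  define W where "W = {y. \<forall>b\<in>B. orthogonal b y}"
  define S where "S = W \<inter> sphere 0 1"
  have W: "subspace W" unfolding W_def by (rule subspace_orthogonal_to_vectors)
  have "dim B < DIM(real^'n)"
    using dim_le_card[OF order_refl B(1)] B(2) by simp
  then obtain x where x: "x \<noteq> 0" "\<And>y. y \<in> span B \<Longrightarrow> orthogonal x y"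
    using orthogonal_to_subspace_exists by blast
  have "x /\<^sub>R norm x \<in> S"
    using x span_base[of _ B] unfolding S_def W_def by (auto simp: orthogonal_def inner_commute)
  then have "S \<noteq> {}" by auto
  moreover have "compact S"
    unfolding S_def using closed_subspace[OF W] by (simp add: closed_Int_compact)
  moreover have "continuous_on S (\<lambda>y. y \<bullet> (H *v y))"
    by (intro continuous_intros linear_continuous_on matrix_vector_mul_linear)
  ultimately obtain x0 where x0: "x0 \<in> S" "\<And>y. y \<in> S \<Longrightarrow> y \<bullet> (H *v y) \<le> x0 \<bullet> (H *v x0)"
    using continuous_attains_sup[of S "\<lambda>y. y \<bullet> (H *v y)"] by blast
  have x0W: "x0 \<in> W" and nx0: "norm x0 = 1" using x0(1) unfolding S_def by auto
  define lam where "lam = x0 \<bullet> (H *v x0)"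
  define z where "z = H *v x0 - lam *\<^sub>R x0"
  have "\<forall>b\<in>B. orthogonal b z"
  proof
    fix b assume "b \<in> B"
    then obtain \<mu> where "H *v b = \<mu> *\<^sub>R b" using B(3) by blast
    moreover have "b \<bullet> x0 = 0" using x0W \<open>b \<in> B\<close> unfolding W_def orthogonal_def by auto
    ultimately show "orthogonal b z"
      unfolding z_def orthogonal_def using symmetric_matrix_inner_commute[OF sym, of b x0]
      by (simp add: inner_diff_right inner_commute)
  qed
  then have "z \<in> W" unfolding W_def by simp
  moreover have zx0: "z \<bullet> x0 = 0"
    unfolding z_def lam_def using nx0 by (simp add: inner_diff_left inner_diff_right inner_commute norm_eq_1)
  ultimately have "z \<bullet> (H *v x0) = 0"
    using rayleigh_maximizer_stationary[OF sym W x0W nx0] x0(2) unfolding S_def by auto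
  then have "z \<bullet> z = 0"
    using zx0 by (simp add: z_def inner_diff_left inner_diff_right inner_commute)
  then have "H *v x0 = lam *\<^sub>R x0" unfolding z_def by simp
  then show ?thesis using that nx0 x0W unfolding W_def by blast
qed

lemma symmetric_matrix_orthonormal_eigenvectors:
  fixes H :: "real^'n^'n"
  assumes sym: "transpose H = H" and "k \<le> CARD('n)"
  shows "\<exists>B. finite B \<and> card B = k \<and> pairwise orthogonal B \<and>
           (\<forall>b\<in>B. norm b = 1 \<and> (\<exists>\<mu>. H *v b = \<mu> *\<^sub>R b))"
  using assms(2)
proof (induction k)
  case 0
  show ?case by (rule exI[of _ "{}"]) simp
next
  case (Suc k)
  then obtain B where B: "finite B" "card B = k" "pairwise orthogonal B"
      "\<forall>b\<in>B. norm b = 1 \<and> (\<exists>\<mu>. H *v b = \<mu> *\<^sub>R b)"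
    by auto
  obtain x where x: "norm x = 1" "\<And>b. b \<in> B \<Longrightarrow> orthogonal b x" "\<exists>\<mu>. H *v x = \<mu> *\<^sub>R x"
    using symmetric_matrix_orthogonal_eigenvector[OF sym B(1)] B(2,4) Suc.prems by auto
  have "x \<notin> B" using x(1,2) by (auto simp: orthogonal_def norm_eq_1)
  then show ?case
    using B x by (intro exI[of _ "insert x B"]) (auto simp: pairwise_insert orthogonal_commute)
qed

lemma symmetric_matrix_eigenbasis:
  fixes H :: "real^'n^'n"
  assumes sym: "transpose H = H"
  obtains B where "finite B" "\<And>b. b \<in> B \<Longrightarrow> norm b = 1"
    "\<And>b. b \<in> B \<Longrightarrow> H *v b = (b \<bullet> (H *v b)) *\<^sub>R b"
    "\<And>x. (\<Sum>b\<in>B. (x \<bullet> b) *\<^sub>R b) = x"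
proof -
  obtain B where B: "finite B" "card B = CARD('n)" "pairwise orthogonal B"
      "\<forall>b\<in>B. norm b = 1 \<and> (\<exists>\<mu>. H *v b = \<mu> *\<^sub>R b)"
    using symmetric_matrix_orthonormal_eigenvectors[OF sym order_refl] by auto
  have ev: "H *v b = (b \<bullet> (H *v b)) *\<^sub>R b" if "b \<in> B" for b
    using B(4) that by (auto simp: norm_eq_1)
  have "independent B"
    using pairwise_orthogonal_independent B(3,4) by fastforce
  then have "UNIV \<subseteq> span B"
    using card_eq_dim[of B UNIV] B(1,2) by simp
  then have "(\<Sum>b\<in>B. (x \<bullet> b) *\<^sub>R b) = x" for x
    using orthonormal_basis_expand[OF B(3) _ _ B(1)] B(4) by auto
  then show ?thesis using that B ev by auto
qed

section \<open>The algorithm in an eigenbasis\<close>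

lemma posdef_matrix_inv:
  fixes H :: "real^'n^'n"
  assumes pd: "\<And>x. x \<noteq> 0 \<Longrightarrow> x \<bullet> (H *v x) > 0"
  shows "matrix_inv H ** H = mat 1" "H ** matrix_inv H = mat 1"
proof -
  have "\<forall>x. H *v x = 0 \<longrightarrow> x = 0"
    using pd by (metis inner_zero_right less_irrefl)
  then have "invertible H"
    using matrix_left_invertible_ker invertible_left_inverse by blast
  then have "H ** matrix_inv H = mat 1 \<and> matrix_inv H ** H = mat 1"
    unfolding invertible_def matrix_inv_def by (rule someI_ex)
  then show "matrix_inv H ** H = mat 1" "H ** matrix_inv H = mat 1" by simp_all
qed

lemma eigenvalue_pos_le_largest:
  fixes H :: "real^'n^'n"
  assumes pd: "\<And>x. x \<noteq> 0 \<Longrightarrow> x \<bullet> (H *v x) > 0" and L: "is_largest_eigenvalue H L"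
    and v: "v \<noteq> 0" "H *v v = \<mu> *\<^sub>R v"
  shows "0 < \<mu>" "\<mu> \<le> L"
proof -
  have "\<mu> * (v \<bullet> v) > 0" using pd[of v] v by simp
  moreover have "v \<bullet> v > 0" using v(1) by simp
  ultimately show "0 < \<mu>" by (simp add: zero_less_mult_iff)
  show "\<mu> \<le> L" using L v unfolding is_largest_eigenvalue_def by blast
qed

lemma largest_eigenvalue_pos:
  fixes H :: "real^'n^'n"
  assumes pd: "\<And>x. x \<noteq> 0 \<Longrightarrow> x \<bullet> (H *v x) > 0" and L: "is_largest_eigenvalue H L"
  shows "L > 0"
  using L eigenvalue_pos_le_largest(1)[OF pd L] unfolding is_largest_eigenvalue_def by blast

lemma matrix_vector_mult_sum_scaleR:
  fixes H :: "real^'n^'n"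
  shows "H *v (\<Sum>b\<in>B. f b *\<^sub>R g b) = (\<Sum>b\<in>B. f b *\<^sub>R (H *v g b))"
  by (induction B rule: infinite_finite_induct)
     (auto simp: matrix_vector_right_distrib matrix_vector_mult_scaleR)

lemma norm_sq_eq_sum_sq_coords:
  fixes B :: "(real^'n) set"
  assumes expand: "\<And>x. (\<Sum>b\<in>B. (x \<bullet> b) *\<^sub>R b) = x"
  shows "(norm v)^2 = (\<Sum>b\<in>B. (b \<bullet> v)^2)"
proof -
  have "(norm v)^2 = v \<bullet> (\<Sum>b\<in>B. (v \<bullet> b) *\<^sub>R b)"
    by (simp add: expand power2_norm_eq_inner)
  also have "\<dots> = (\<Sum>b\<in>B. (b \<bullet> v)^2)"
    by (simp add: inner_sum_right power2_eq_square inner_commute)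
  finally show ?thesis .
qed

lemma quad_obj_excess_eigenbasis:
  fixes H :: "real^'n^'n"
  assumes sym: "transpose H = H" and H_ts: "H *v ts = q"
    and expand: "\<And>x. (\<Sum>b\<in>B. (x \<bullet> b) *\<^sub>R b) = x"
    and ev: "\<And>b. b \<in> B \<Longrightarrow> H *v b = lam b *\<^sub>R b"
  shows "quad_obj H q th - quad_obj H q ts = (1/2) * (\<Sum>b\<in>B. lam b * (b \<bullet> (th - ts))^2)"
proof -
  define v where "v = th - ts"
  have "quad_obj H q th - quad_obj H q ts = (1/2) * (v \<bullet> (H *v v))"
    unfolding quad_obj_def v_def H_ts[symmetric]
    using symmetric_matrix_inner_commute[OF sym, of th ts]
    by (simp add: matrix_vector_right_distrib inner_diff_left inner_diff_right inner_commute algebra_simps)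
  also have "H *v v = (\<Sum>b\<in>B. (v \<bullet> b) *\<^sub>R (lam b *\<^sub>R b))"
    using matrix_vector_mult_sum_scaleR[of H "\<lambda>b. v \<bullet> b" "\<lambda>b. b" B] expand[of v] by (simp add: ev)
  also have "v \<bullet> \<dots> = (\<Sum>b\<in>B. lam b * (b \<bullet> v)^2)"
    by (simp add: inner_sum_right power2_eq_square inner_commute algebra_simps)
  finally show ?thesis unfolding v_def .
qed

lemma trace_mult_inverse_eigenbasis:
  fixes H C :: "real^'n^'n"
  assumes inv: "matrix_inv H ** H = mat 1" and "finite B"
    and expand: "\<And>x. (\<Sum>b\<in>B. (x \<bullet> b) *\<^sub>R b) = x"
    and ev: "\<And>b. b \<in> B \<Longrightarrow> H *v b = lam b *\<^sub>R b"
    and lam: "\<And>b. b \<in> B \<Longrightarrow> lam b \<noteq> 0"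
  shows "trace (C ** matrix_inv H) = (\<Sum>b\<in>B. (b \<bullet> (C *v b)) / lam b)"
proof -
  have inv_expand: "matrix_inv H *v v = (\<Sum>b\<in>B. ((v \<bullet> b) / lam b) *\<^sub>R b)" for v
  proof -
    define w where "w = (\<Sum>b\<in>B. ((v \<bullet> b) / lam b) *\<^sub>R b)"
    have "H *v w = (\<Sum>b\<in>B. (v \<bullet> b) *\<^sub>R b)"
      unfolding w_def matrix_vector_mult_sum_scaleR by (intro sum.cong refl) (simp add: ev lam)
    then have "H *v w = v" by (simp add: expand)
    then have "matrix_inv H *v v = matrix_inv H *v (H *v w)" by simp
    also have "\<dots> = w" by (simp add: matrix_vector_mul_assoc inv)
    finally show ?thesis unfolding w_def .
  qed
  have Hinv_entry: "matrix_inv H $ k $ i = (\<Sum>b\<in>B. (b $ i / lam b) * b $ k)" for k i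
  proof -
    have "matrix_inv H $ k $ i = (matrix_inv H *v axis i 1) $ k"
      by (simp add: matrix_vector_mult_def axis_def if_distrib cong: if_cong)
    then show ?thesis
      unfolding inv_expand by (simp add: inner_axis' inner_axis inner_commute)
  qed
  have "trace (C ** matrix_inv H) = (\<Sum>i\<in>UNIV. \<Sum>k\<in>UNIV. C $ i $ k * matrix_inv H $ k $ i)"
    by (simp add: trace_def matrix_matrix_mult_def)
  also have "\<dots> = (\<Sum>i\<in>UNIV. \<Sum>k\<in>UNIV. \<Sum>b\<in>B. (b $ i * C $ i $ k * b $ k) / lam b)"
    unfolding Hinv_entry by (simp add: sum_distrib_left mult.commute mult.left_commute)
  also have "\<dots> = (\<Sum>b\<in>B. (\<Sum>i\<in>UNIV. \<Sum>k\<in>UNIV. b $ i * C $ i $ k * b $ k) / lam b)"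
    by (simp add: sum_divide_distrib sum.swap[of _ B])
  also have "\<dots> = (\<Sum>b\<in>B. (b \<bullet> (C *v b)) / lam b)"
    by (simp add: inner_vec_def matrix_vector_mult_def sum_distrib_left mult.assoc)
  finally show ?thesis .
qed

lemma noisy_alg_eigen_coord_rec:
  fixes H :: "real^'n^'n" and ts th0 :: "real^'n" and e :: "nat \<Rightarrow> real^'n" and \<alpha> \<beta> :: real
  assumes sym: "transpose H = H" and ev: "H *v b = lam *\<^sub>R b"
  defines "d \<equiv> \<lambda>n. real n * (b \<bullet> (noisy_alg H ts \<alpha> \<beta> th0 e n - ts))"
  shows "d (Suc (Suc n)) = (2 - \<alpha> * lam - \<beta> * lam) * d (Suc n) - (1 - \<beta> * lam) * d n
           + (real (Suc n) * \<alpha> + \<beta>) * (b \<bullet> e (Suc (Suc n)))"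
proof -
  have ie: "b \<bullet> (H *v v) = lam * (b \<bullet> v)" for v
    using symmetric_matrix_inner_commute[OF sym, of b v] ev by (simp add: inner_commute)
  define P where "P = b \<bullet> noisy_alg H ts \<alpha> \<beta> th0 e (Suc n)"
  define Q where "Q = b \<bullet> noisy_alg H ts \<alpha> \<beta> th0 e n"
  define K where "K = b \<bullet> ts"
  define E where "E = b \<bullet> e (Suc (Suc n))"
  define m where "m = real (Suc (Suc n))"
  have m: "m \<noteq> 0" "real (Suc n + 1) = m" "2 * real (Suc n) - real n = m" unfolding m_def by simp_all
  have clear_m: "m * (A / m * X - B / m * Y - 1 / m * Z - K) = A * (X - K) - B * (Y - K) - Z"
    if "A - B = m" for A B X Y Z
  proof -
    have "m * (A / m * X - B / m * Y - 1 / m * Z - K) = A * X - B * Y - Z - m * K"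
      using m(1) by (simp add: right_diff_distrib)
    moreover have "m * K = A * K - B * K" by (simp flip: that left_diff_distrib)
    ultimately show ?thesis by (simp add: algebra_simps)
  qed
  have "b \<bullet> noisy_alg H ts \<alpha> \<beta> th0 e (Suc (Suc n)) = (2 * real (Suc n) / m) * P - (real n / m) * Q
     - (1 / m) * ((real (Suc n) * (\<alpha> + \<beta>)) * (lam * (P - K))
        - (real n * \<beta>) * (lam * (Q - K)) - (real (Suc n) * \<alpha> + \<beta>) * E)"
    unfolding noisy_alg.simps(3) P_def Q_def K_def E_def m(2)
    by (simp add: inner_diff_right inner_add_right ie)
  then have "d (Suc (Suc n)) = m * ((2 * real (Suc n) / m) * P - (real n / m) * Q
     - (1 / m) * ((real (Suc n) * (\<alpha> + \<beta>)) * (lam * (P - K))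
        - (real n * \<beta>) * (lam * (Q - K)) - (real (Suc n) * \<alpha> + \<beta>) * E) - K)"
    unfolding d_def K_def m_def by (simp add: inner_diff_right)
  also have "\<dots> = 2 * real (Suc n) * (P - K) - real n * (Q - K)
      - ((real (Suc n) * (\<alpha> + \<beta>)) * (lam * (P - K)) - (real n * \<beta>) * (lam * (Q - K))
         - (real (Suc n) * \<alpha> + \<beta>) * E)"
    using clear_m[OF m(3)] by simp
  also have "\<dots> = (2 - \<alpha> * lam - \<beta> * lam) * (real (Suc n) * (P - K))
      - (1 - \<beta> * lam) * (real n * (Q - K)) + (real (Suc n) * \<alpha> + \<beta>) * E"
    by (simp add: algebra_simps)
  finally show ?thesis
    unfolding d_def P_def Q_def K_def E_def by (simp add: inner_diff_right)
qed

lemma noisy_alg_eigen_coord: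
  fixes H :: "real^'n^'n"
  assumes sym: "transpose H = H" and ev: "H *v b = lam *\<^sub>R b"
  shows "real N * (b \<bullet> (noisy_alg H ts \<alpha> \<beta> th0 e N - ts))
    = impulse_response (\<alpha> * lam) (\<beta> * lam) N * (b \<bullet> (th0 - ts))
      + (\<Sum>j\<in>{1..<N}. impulse_response (\<alpha> * lam) (\<beta> * lam) (N - j) * (real j * \<alpha> + \<beta>) * (b \<bullet> e (Suc j)))"
  using impulse_response_duhamel[where d = "\<lambda>n. real n * (b \<bullet> (noisy_alg H ts \<alpha> \<beta> th0 e n - ts))"
      and g = "\<lambda>j. (real j * \<alpha> + \<beta>) * (b \<bullet> e (Suc j))", OF _ noisy_alg_eigen_coord_rec[OF sym ev]]
  by (simp add: mult.assoc)

text \<open>The second moment of \<open>N (b \<bullet> (\<theta>\<^sub>N - \<theta>\<^sub>*))\<close> along a unit eigenvector \<open>b\<close> of \<open>H\<close>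
  with eigenvalue \<open>lam\<close>, where \<open>\<sigma> = b \<bullet> C b\<close> and \<open>c = b \<bullet> (\<theta>\<^sub>0 - \<theta>\<^sub>*)\<close>.\<close>

definition eigen_coord_moment :: "real \<Rightarrow> real \<Rightarrow> real \<Rightarrow> real \<Rightarrow> real \<Rightarrow> nat \<Rightarrow> real" where
  "eigen_coord_moment \<alpha> \<beta> lam \<sigma> c N =
     (impulse_response (\<alpha> * lam) (\<beta> * lam) N * c)^2
     + \<sigma> * (\<Sum>j\<in>{1..<N}. (impulse_response (\<alpha> * lam) (\<beta> * lam) (N - j) * (real j * \<alpha> + \<beta>))^2)"

lemma eigen_coord_moment_le:
  assumes \<alpha>: "0 < \<alpha>" "\<alpha> \<le> \<beta>" and lam: "0 < lam" "\<beta> * lam \<le> 1" and \<sigma>: "\<sigma> \<ge> 0"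
  shows "lam * eigen_coord_moment \<alpha> \<beta> lam \<sigma> c N \<le> c^2 / \<alpha> + \<sigma> * (real N * \<alpha> + \<beta>)^2 / (\<alpha> * \<beta> * lam)"
proof -
  let ?G = "impulse_response (\<alpha> * lam) (\<beta> * lam)"
  have "\<alpha> * lam \<le> \<beta> * lam" using \<alpha> lam by simp
  then have G: "(\<alpha> * lam) * (?G N)^2 \<le> 1"
    using \<alpha> lam by (intro impulse_response_sq_le) auto
  have "lam * (?G N * c)^2 = ((\<alpha> * lam) * (?G N)^2) * c^2 / \<alpha>"
    using \<alpha> by (simp add: power_mult_distrib field_simps)
  also have "\<dots> \<le> c^2 / \<alpha>"
    using divide_right_mono[OF mult_right_mono[OF G zero_le_power2], of \<alpha> c] \<alpha> by (simp add: mult.assoc)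
  finally have "lam * (?G N * c)^2 \<le> c^2 / \<alpha>" .
  moreover have "\<sigma> * (lam * (\<Sum>j\<in>{1..<N}. (?G (N - j) * (real j * \<alpha> + \<beta>))^2))
      \<le> \<sigma> * ((real N * \<alpha> + \<beta>)^2 / (\<alpha> * \<beta> * lam))"
    using impulse_response_weighted_sum_sq_le[OF \<alpha> lam] \<sigma> by (rule mult_left_mono)
  ultimately show ?thesis
    unfolding eigen_coord_moment_def by (simp add: distrib_left mult.left_commute)
qed

section \<open>Uncorrelated noise\<close>

lemma integrable_mult_of_square_integrable:
  fixes X Y :: "'a \<Rightarrow> real"
  assumes "X \<in> borel_measurable M" "Y \<in> borel_measurable M"
    "integrable M (\<lambda>w. (X w)^2)" "integrable M (\<lambda>w. (Y w)^2)"
  shows "integrable M (\<lambda>w. X w * Y w)"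
proof (rule Bochner_Integration.integrable_bound)
  show "integrable M (\<lambda>w. (X w)^2 + (Y w)^2)" using assms by auto
  show "AE w in M. norm (X w * Y w) \<le> norm ((X w)^2 + (Y w)^2)"
  proof (rule AE_I2)
    fix w
    have "2 * \<bar>X w\<bar> * \<bar>Y w\<bar> \<le> (X w)^2 + (Y w)^2"
      using sum_squares_bound[of "\<bar>X w\<bar>" "\<bar>Y w\<bar>"] by simp
    moreover have "\<bar>X w\<bar> * \<bar>Y w\<bar> \<ge> 0" by simp
    ultimately have "\<bar>X w\<bar> * \<bar>Y w\<bar> \<le> (X w)^2 + (Y w)^2" by linarith
    then show "norm (X w * Y w) \<le> norm ((X w)^2 + (Y w)^2)" by (simp add: abs_mult)
  qed
qed (use assms in auto)

lemma (in prob_space) expectation_square_uncorrelated_sum: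
  fixes Z :: "nat \<Rightarrow> 'a \<Rightarrow> real" and k :: "nat \<Rightarrow> real"
  assumes fin: "finite J"
    and int: "\<And>j l. j \<in> J \<Longrightarrow> l \<in> J \<Longrightarrow> integrable M (\<lambda>w. Z j w * Z l w)"
      "\<And>j. j \<in> J \<Longrightarrow> integrable M (Z j)"
    and mean: "\<And>j. j \<in> J \<Longrightarrow> expectation (Z j) = 0"
    and cov: "\<And>j l. j \<in> J \<Longrightarrow> l \<in> J \<Longrightarrow> expectation (\<lambda>w. Z j w * Z l w) = (if j = l then s else 0)"
  shows "integrable M (\<lambda>w. (A + (\<Sum>j\<in>J. k j * Z j w))^2)"
    and "expectation (\<lambda>w. (A + (\<Sum>j\<in>J. k j * Z j w))^2) = A^2 + s * (\<Sum>j\<in>J. (k j)^2)"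
proof -
  have expand: "(A + (\<Sum>j\<in>J. k j * Z j w))^2 =
      A^2 + (\<Sum>j\<in>J. (2 * A * k j) * Z j w) + (\<Sum>j\<in>J. \<Sum>l\<in>J. (k j * k l) * (Z j w * Z l w))" for w
    by (simp add: power2_eq_square algebra_simps sum_distrib_left sum_distrib_right sum.distrib)
  have int1: "integrable M (\<lambda>w. \<Sum>j\<in>J. (2 * A * k j) * Z j w)"
    using int(2) by (auto intro!: integrable_sum)
  have int2: "integrable M (\<lambda>w. \<Sum>j\<in>J. \<Sum>l\<in>J. (k j * k l) * (Z j w * Z l w))"
    using int(1) by (auto intro!: integrable_sum)
  show "integrable M (\<lambda>w. (A + (\<Sum>j\<in>J. k j * Z j w))^2)"
    unfolding expand by (intro Bochner_Integration.integrable_add int1 int2) simp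
  have "expectation (\<lambda>w. \<Sum>j\<in>J. \<Sum>l\<in>J. (k j * k l) * (Z j w * Z l w))
      = (\<Sum>j\<in>J. \<Sum>l\<in>J. (k j * k l) * (if j = l then s else 0))"
    using int(1) by (simp add: integral_sum integrable_sum cov)
  also have "\<dots> = s * (\<Sum>j\<in>J. (k j)^2)"
    using fin by (simp add: if_distrib sum_distrib_left power2_eq_square mult.commute cong: if_cong)
  finally show "expectation (\<lambda>w. (A + (\<Sum>j\<in>J. k j * Z j w))^2) = A^2 + s * (\<Sum>j\<in>J. (k j)^2)"
    unfolding expand using int1 int2 int(2) mean prob_space
    by (simp add: Bochner_Integration.integral_add integral_sum)
qed

locale uncorrelated_noise = prob_space M for M :: "'a measure" +
  fixes C :: "real^'d^'d" and eps :: "nat \<Rightarrow> 'a \<Rightarrow> real^'d"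
  assumes eps_meas: "\<And>n. n \<ge> 2 \<Longrightarrow> eps n \<in> borel_measurable M"
    and eps_L2: "\<And>n i. n \<ge> 2 \<Longrightarrow> integrable M (\<lambda>w. (eps n w $ i)^2)"
    and eps_mean: "\<And>n i. n \<ge> 2 \<Longrightarrow> expectation (\<lambda>w. eps n w $ i) = 0"
    and eps_uncorr: "\<And>n m i j. n \<ge> 2 \<Longrightarrow> m \<ge> 2 \<Longrightarrow> n \<noteq> m \<Longrightarrow>
                       expectation (\<lambda>w. eps n w $ i * eps m w $ j) = 0"
    and eps_cov: "\<And>n i j. n \<ge> 2 \<Longrightarrow> expectation (\<lambda>w. eps n w $ i * eps n w $ j) = C $ i $ j"
begin

lemma eps_component_measurable:
  assumes "n \<ge> 2"
  shows "(\<lambda>w. eps n w $ i) \<in> borel_measurable M"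
proof -
  have "(\<lambda>v::real^'d. v $ i) \<in> borel_measurable borel"
    by (intro borel_measurable_continuous_onI continuous_intros)
  then show ?thesis using measurable_compose[OF eps_meas[OF assms]] by blast
qed

lemma eps_component_integrable: "n \<ge> 2 \<Longrightarrow> integrable M (\<lambda>w. eps n w $ i)"
  using square_integrable_imp_integrable eps_component_measurable eps_L2 by blast

lemma inner_eps_integrable: "n \<ge> 2 \<Longrightarrow> integrable M (\<lambda>w. u \<bullet> eps n w)"
  unfolding inner_vec_def using eps_component_integrable by (auto intro!: integrable_sum)

lemma inner_eps_expectation: "n \<ge> 2 \<Longrightarrow> expectation (\<lambda>w. u \<bullet> eps n w) = 0"
  unfolding inner_vec_def using eps_component_integrable eps_mean by (simp add: integral_sum)

lemma inner_eps_mult_expansion: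
  "(u \<bullet> eps n w) * (v \<bullet> eps m w) = (\<Sum>i\<in>UNIV. \<Sum>k\<in>UNIV. (u $ i * v $ k) * (eps n w $ i * eps m w $ k))"
  unfolding inner_vec_def by (simp add: sum_product algebra_simps)

lemma inner_eps_mult_integrable:
  assumes "n \<ge> 2" "m \<ge> 2"
  shows "integrable M (\<lambda>w. (u \<bullet> eps n w) * (v \<bullet> eps m w))"
  unfolding inner_eps_mult_expansion
  using integrable_mult_of_square_integrable[OF eps_component_measurable eps_component_measurable eps_L2 eps_L2] assms
  by (auto intro!: integrable_sum)

lemma inner_eps_covariance:
  assumes "n \<ge> 2" "m \<ge> 2"
  shows "expectation (\<lambda>w. (u \<bullet> eps n w) * (v \<bullet> eps m w)) = (if n = m then u \<bullet> (C *v v) else 0)"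
proof -
  have "expectation (\<lambda>w. (u \<bullet> eps n w) * (v \<bullet> eps m w))
      = (\<Sum>i\<in>UNIV. \<Sum>k\<in>UNIV. (u $ i * v $ k) * expectation (\<lambda>w. eps n w $ i * eps m w $ k))"
    unfolding inner_eps_mult_expansion
    using integrable_mult_of_square_integrable[OF eps_component_measurable eps_component_measurable eps_L2 eps_L2] assms
    by (simp add: integral_sum integrable_sum)
  also have "\<dots> = (if n = m then u \<bullet> (C *v v) else 0)"
    using assms eps_cov eps_uncorr
    by (simp add: inner_vec_def matrix_vector_mult_def sum_distrib_left algebra_simps)
  finally show ?thesis .
qed

lemma eigen_coord_second_moment:
  fixes H :: "real^'d^'d" and ts th0 :: "real^'d" and \<alpha> \<beta> :: real and N :: nat
  assumes sym: "transpose H = H" and ev: "H *v b = lam *\<^sub>R b"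
  defines "X \<equiv> \<lambda>w. (real N * (b \<bullet> (noisy_alg H ts \<alpha> \<beta> th0 (\<lambda>n. eps n w) N - ts)))^2"
  shows "integrable M X"
    and "expectation X = eigen_coord_moment \<alpha> \<beta> lam (b \<bullet> (C *v b)) (b \<bullet> (th0 - ts)) N"
proof -
  let ?G = "impulse_response (\<alpha> * lam) (\<beta> * lam)"
  let ?k = "\<lambda>j. ?G (N - j) * (real j * \<alpha> + \<beta>)"
  let ?Z = "\<lambda>j w. b \<bullet> eps (Suc j) w"
  have X: "X = (\<lambda>w. (?G N * (b \<bullet> (th0 - ts)) + (\<Sum>j\<in>{1..<N}. ?k j * ?Z j w))^2)"
    unfolding X_def noisy_alg_eigen_coord[OF sym ev] by (simp add: mult.assoc)
  have idx: "j \<in> {1..<N} \<Longrightarrow> Suc j \<ge> 2" for j by auto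
  note second_moment = expectation_square_uncorrelated_sum[where J = "{1..<N}" and Z = ?Z and k = ?k
      and s = "b \<bullet> (C *v b)" and A = "?G N * (b \<bullet> (th0 - ts))"]
  have hyps: "integrable M (\<lambda>w. ?Z j w * ?Z l w)" "integrable M (?Z j)" "expectation (?Z j) = 0"
      "expectation (\<lambda>w. ?Z j w * ?Z l w) = (if j = l then b \<bullet> (C *v b) else 0)"
    if "j \<in> {1..<N}" "l \<in> {1..<N}" for j l
    using inner_eps_mult_integrable inner_eps_integrable inner_eps_expectation inner_eps_covariance
      idx[OF that(1)] idx[OF that(2)] by auto
  show "integrable M X"
    unfolding X by (rule second_moment(1)) (use hyps in auto)
  show "expectation X = eigen_coord_moment \<alpha> \<beta> lam (b \<bullet> (C *v b)) (b \<bullet> (th0 - ts)) N"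
    unfolding X eigen_coord_moment_def
    by (subst second_moment(2)) (use hyps in \<open>auto simp: power_mult_distrib\<close>)
qed

lemma expected_excess_eq_sum:
  fixes H :: "real^'d^'d" and ts th0 q :: "real^'d" and \<alpha> \<beta> :: real and N :: nat
  assumes sym: "transpose H = H" and H_ts: "H *v ts = q" and N: "N \<ge> 1"
    and B: "finite B" "\<And>x. (\<Sum>b\<in>B. (x \<bullet> b) *\<^sub>R b) = x"
    and ev: "\<And>b. b \<in> B \<Longrightarrow> H *v b = lam b *\<^sub>R b"
  shows "expectation (\<lambda>w. quad_obj H q (noisy_alg H ts \<alpha> \<beta> th0 (\<lambda>n. eps n w) N)) - quad_obj H q ts
    = (\<Sum>b\<in>B. lam b * eigen_coord_moment \<alpha> \<beta> (lam b) (b \<bullet> (C *v b)) (b \<bullet> (th0 - ts)) N)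
      / (2 * (real N)^2)"
proof -
  define \<theta> where "\<theta> w = noisy_alg H ts \<alpha> \<beta> th0 (\<lambda>n. eps n w) N" for w
  define X where "X b w = (real N * (b \<bullet> (\<theta> w - ts)))^2" for b w
  have X: "integrable M (X b)"
    "expectation (X b) = eigen_coord_moment \<alpha> \<beta> (lam b) (b \<bullet> (C *v b)) (b \<bullet> (th0 - ts)) N"
    if "b \<in> B" for b
    using eigen_coord_second_moment[OF sym ev[OF that]] unfolding X_def \<theta>_def by auto
  have excess: "quad_obj H q (\<theta> w) = quad_obj H q ts + (\<Sum>b\<in>B. lam b * X b w) / (2 * (real N)^2)" for w
  proof -
    have "quad_obj H q (\<theta> w) - quad_obj H q ts = (1/2) * (\<Sum>b\<in>B. lam b * (b \<bullet> (\<theta> w - ts))^2)"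
      by (rule quad_obj_excess_eigenbasis[OF sym H_ts B(2) ev])
    also have "\<dots> = (\<Sum>b\<in>B. lam b * X b w) / (2 * (real N)^2)"
      unfolding X_def sum_divide_distrib sum_distrib_left using N
      by (intro sum.cong refl) (simp add: power_mult_distrib field_simps)
    finally show ?thesis by simp
  qed
  have "expectation (\<lambda>w. quad_obj H q (\<theta> w))
      = quad_obj H q ts + (\<Sum>b\<in>B. lam b * expectation (X b)) / (2 * (real N)^2)"
    unfolding excess using X(1) prob_space by (simp add: integral_sum)
  then show ?thesis unfolding \<theta>_def using X(2) by simp
qed

theorem expected_excess_le:
  fixes H :: "real^'d^'d" and ts th0 q :: "real^'d" and L \<alpha> \<beta> :: real and N :: nat
  assumes H_sym: "transpose H = H" and H_pd: "\<And>x. x \<noteq> 0 \<Longrightarrow> x \<bullet> (H *v x) > 0"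
    and L_max: "is_largest_eigenvalue H L" and C_psd: "\<And>x. x \<bullet> (C *v x) \<ge> 0"
    and H_ts: "H *v ts = q" and step: "0 < \<alpha>" "\<alpha> \<le> \<beta>" "\<beta> \<le> 1 / L" and N: "N \<ge> 1"
  shows "expectation (\<lambda>w. quad_obj H q (noisy_alg H ts \<alpha> \<beta> th0 (\<lambda>n. eps n w) N)) - quad_obj H q ts
    \<le> ((norm (th0 - ts))^2 / \<alpha> + (real N * \<alpha> + \<beta>)^2 / (\<alpha> * \<beta>) * trace (C ** matrix_inv H))
       / (2 * (real N)^2)"
proof -
  obtain B where B: "finite B" "\<And>b. b \<in> B \<Longrightarrow> norm b = 1"
      "\<And>b. b \<in> B \<Longrightarrow> H *v b = (b \<bullet> (H *v b)) *\<^sub>R b" "\<And>x. (\<Sum>b\<in>B. (x \<bullet> b) *\<^sub>R b) = x"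
    using symmetric_matrix_eigenbasis[OF H_sym] by blast
  define lam where "lam b = b \<bullet> (H *v b)" for b
  have ev: "H *v b = lam b *\<^sub>R b" if "b \<in> B" for b using B(3) that unfolding lam_def .
  have lam: "0 < lam b" "lam b \<le> L" if "b \<in> B" for b
  proof -
    have "b \<noteq> 0" using B(2)[OF that] by auto
    then show "0 < lam b" "lam b \<le> L"
      using eigenvalue_pos_le_largest[OF H_pd L_max _ ev[OF that]] by auto
  qed
  have "L > 0" by (rule largest_eigenvalue_pos[OF H_pd L_max])
  have "\<beta> * lam b \<le> 1" if "b \<in> B" for b
  proof -
    have "\<beta> * lam b \<le> (1 / L) * L"
      using step lam[OF that] \<open>L > 0\<close> by (intro mult_mono) auto
    then show ?thesis using \<open>L > 0\<close> by simp
  qed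
  then have moment: "lam b * eigen_coord_moment \<alpha> \<beta> (lam b) (b \<bullet> (C *v b)) (b \<bullet> (th0 - ts)) N
      \<le> (b \<bullet> (th0 - ts))^2 / \<alpha> + (real N * \<alpha> + \<beta>)^2 / (\<alpha> * \<beta>) * ((b \<bullet> (C *v b)) / lam b)"
    if "b \<in> B" for b
    using eigen_coord_moment_le[OF step(1,2) lam(1)[OF that] _ C_psd] that by (simp add: field_simps)
  have trace: "(\<Sum>b\<in>B. (b \<bullet> (C *v b)) / lam b) = trace (C ** matrix_inv H)"
    using trace_mult_inverse_eigenbasis[OF posdef_matrix_inv(1)[OF H_pd] B(1,4) ev] lam(1) by force
  have "(\<Sum>b\<in>B. lam b * eigen_coord_moment \<alpha> \<beta> (lam b) (b \<bullet> (C *v b)) (b \<bullet> (th0 - ts)) N)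
      \<le> (\<Sum>b\<in>B. (b \<bullet> (th0 - ts))^2 / \<alpha> + (real N * \<alpha> + \<beta>)^2 / (\<alpha> * \<beta>) * ((b \<bullet> (C *v b)) / lam b))"
    using moment by (rule sum_mono)
  also have "\<dots> = (norm (th0 - ts))^2 / \<alpha> + (real N * \<alpha> + \<beta>)^2 / (\<alpha> * \<beta>) * trace (C ** matrix_inv H)"
    unfolding sum.distrib sum_divide_distrib[symmetric] sum_distrib_left[symmetric] trace
      norm_sq_eq_sum_sq_coords[OF B(4), of "th0 - ts"] ..
  finally show ?thesis
    using expected_excess_eq_sum[OF H_sym H_ts N B(1,4) ev] by (simp add: divide_right_mono)
qed

end

section \<open>Choice of the step sizes\<close>

lemma tuned_step_sizes_cases:
  fixes r T L \<alpha> \<beta> :: real and N :: nat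
  assumes r: "r > 0" and T: "T > 0" and L: "L > 0" and N: "N \<ge> 1"
    and \<alpha>: "\<alpha> = min (r / (sqrt (L * T) * real N)) (1 / L)"
    and \<beta>: "\<beta> = min (real N * \<alpha>) (1 / L)"
  defines "Q \<equiv> r^2 / \<alpha> + (real N * \<alpha> + \<beta>)^2 / (\<alpha> * \<beta>) * T"
  shows "Q \<le> 2 * L * r^2 + 3 * real N * T \<or> Q \<le> 2 * r * sqrt (L * T) * real N + 4 * real N * T"
proof -
  define n where "n = real N"
  define s where "s = sqrt (L * T)"
  have n: "n \<ge> 1" using N unfolding n_def by simp
  have s: "s > 0" "s^2 = L * T" unfolding s_def using L T by auto
  consider (long) "1 / L \<le> r / (s * n)" | (short) "r / (s * n) < 1 / L" "n * \<alpha> \<le> 1 / L"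
    | (middle) "r / (s * n) < 1 / L" "1 / L < n * \<alpha>"
    by linarith
  then show ?thesis
  proof cases
    case long
    then have \<alpha>L: "\<alpha> = 1 / L" and \<beta>L: "\<beta> = 1 / L"
      using \<alpha> \<beta> n L unfolding s_def n_def by (auto simp: min_def divide_le_cancel)
    have "s * n \<le> r * L" using long s n L by (simp add: field_simps)
    then have "(s * n)^2 \<le> (r * L)^2" using s n by (intro power_mono) auto
    then have "T * n^2 \<le> L * r^2" using s L by (simp add: power_mult_distrib power2_eq_square field_simps)
    moreover have "(n * \<alpha> + \<beta>)^2 / (\<alpha> * \<beta>) = (n + 1)^2"
      unfolding \<alpha>L \<beta>L using L by (simp add: field_simps power2_eq_square)
    moreover have "(n + 1)^2 * T \<le> (n^2 + 3 * n) * T"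
      using n T by (intro mult_right_mono) (auto simp: power2_eq_square algebra_simps)
    ultimately have "Q \<le> 2 * L * r^2 + 3 * n * T"
      unfolding Q_def n_def[symmetric] \<alpha>L by (simp add: algebra_simps)
    then show ?thesis unfolding n_def by simp
  next
    case short
    then have \<alpha>s: "\<alpha> = r / (s * n)" and \<beta>s: "\<beta> = n * \<alpha>"
      using \<alpha> \<beta> unfolding s_def n_def by auto
    have "\<alpha> > 0" using \<alpha>s r s n by simp
    have "r^2 / \<alpha> = r * s * n"
      unfolding \<alpha>s using r s n by (simp add: field_simps power2_eq_square)
    moreover have "(n * \<alpha> + \<beta>)^2 / (\<alpha> * \<beta>) = 4 * n"
      unfolding \<beta>s using \<open>\<alpha> > 0\<close> n by (simp add: field_simps power2_eq_square)
    ultimately have "Q = r * s * n + 4 * n * T"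
      unfolding Q_def n_def[symmetric] by simp
    moreover have "r * s * n \<ge> 0" using r s n by simp
    ultimately show ?thesis unfolding s_def n_def by linarith
  next
    case middle
    then have \<alpha>s: "\<alpha> = r / (s * n)" and \<beta>L: "\<beta> = 1 / L"
      using \<alpha> \<beta> unfolding s_def n_def by auto
    have "\<alpha> > 0" using \<alpha>s r s n by simp
    have "1 / (\<alpha> * L) < n" using middle \<open>\<alpha> > 0\<close> L by (simp add: field_simps)
    moreover have "(n * \<alpha> + \<beta>)^2 / (\<alpha> * \<beta>) = n^2 * \<alpha> * L + 2 * n + 1 / (\<alpha> * L)"
      unfolding \<beta>L using \<open>\<alpha> > 0\<close> L by (simp add: field_simps power2_eq_square)
    ultimately have "(n * \<alpha> + \<beta>)^2 / (\<alpha> * \<beta>) * T \<le> (n^2 * \<alpha> * L + 3 * n) * T"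
      using T by (intro mult_right_mono) auto
    moreover have "n^2 * \<alpha> * L * T = r * s * n" "r^2 / \<alpha> = r * s * n"
      unfolding \<alpha>s s(2)[symmetric] using s n r by (simp_all add: field_simps power2_eq_square)
    ultimately have "Q \<le> 2 * r * s * n + 3 * n * T"
      unfolding Q_def n_def[symmetric] by (simp add: algebra_simps)
    moreover have "n * T \<ge> 0" using n T by simp
    ultimately show ?thesis unfolding s_def n_def by linarith
  qed
qed

lemma tuned_step_sizes_bound:
  fixes r T L \<alpha> \<beta> :: real and N :: nat
  assumes r: "r > 0" and T: "T > 0" and L: "L > 0" and N: "N \<ge> 1"
    and \<alpha>: "\<alpha> = min (r / (sqrt (L * T) * real N)) (1 / L)"
    and \<beta>: "\<beta> = min (real N * \<alpha>) (1 / L)"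
  shows "(r^2 / \<alpha> + (real N * \<alpha> + \<beta>)^2 / (\<alpha> * \<beta>) * T) / (2 * (real N)^2)
     \<le> max (5 * T / real N) (max (5 * sqrt (T * L) * r / real N) (2 * L * r^2 / (real N)^2))"
    (is "?Q / (2 * (real N)^2) \<le> ?M")
proof -
  define n where "n = real N"
  define s where "s = sqrt (L * T)"
  have n: "n \<ge> 1" using N unfolding n_def by simp
  have M: "5 * T / n \<le> ?M" "5 * s * r / n \<le> ?M" "2 * L * r^2 / n^2 \<le> ?M"
    unfolding n_def s_def by (auto simp: mult.commute)
  have "5 * T / n \<ge> 0" using T n by simp
  consider "?Q \<le> 2 * L * r^2 + 3 * n * T" | "?Q \<le> 2 * r * s * n + 4 * n * T"
    using tuned_step_sizes_cases[OF assms] unfolding n_def s_def by blast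
  then show ?thesis
  proof cases
    case 1
    then have "?Q / (2 * n^2) \<le> (2 * L * r^2 + 3 * n * T) / (2 * n^2)"
      using n by (simp add: divide_right_mono)
    also have "\<dots> = (1/2) * (2 * L * r^2 / n^2) + (3/10) * (5 * T / n)"
      using n by (simp add: field_simps power2_eq_square)
    also have "\<dots> \<le> (1/2) * ?M + (3/10) * ?M"
      using M by (intro add_mono mult_left_mono) auto
    finally show ?thesis using M(1) \<open>5 * T / n \<ge> 0\<close> unfolding n_def by linarith
  next
    case 2
    then have "?Q / (2 * n^2) \<le> (2 * r * s * n + 4 * n * T) / (2 * n^2)"
      using n by (simp add: divide_right_mono)
    also have "\<dots> = (1/5) * (5 * s * r / n) + (2/5) * (5 * T / n)"
      using n by (simp add: field_simps power2_eq_square)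
    also have "\<dots> \<le> (1/5) * ?M + (2/5) * ?M"
      using M by (intro add_mono mult_left_mono) auto
    finally show ?thesis using M(1) \<open>5 * T / n \<ge> 0\<close> unfolding n_def by linarith
  qed
qed

theorem corollary3:
  fixes M :: "'w measure"
    and H C :: "real^'d^'d" and q th0 :: "real^'d" and L :: real
    and eps :: "nat \<Rightarrow> 'w \<Rightarrow> real^'d"
    and N :: nat and \<alpha> \<beta> :: real
  assumes P: "prob_space M"
    and H_sym: "transpose H = H"
    and H_pd: "\<And>x. x \<noteq> 0 \<Longrightarrow> x \<bullet> (H *v x) > 0"
    and L_max: "is_largest_eigenvalue H L"
    and C_sym: "transpose C = C"
    and C_psd: "\<And>x. x \<bullet> (C *v x) \<ge> 0"
    and eps_meas: "\<And>n. n \<ge> 2 \<Longrightarrow> eps n \<in> borel_measurable M"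
    and eps_L2: "\<And>n i. n \<ge> 2 \<Longrightarrow> integrable M (\<lambda>w. (eps n w $ i)^2)"
    and eps_mean: "\<And>n i. n \<ge> 2 \<Longrightarrow> prob_space.expectation M (\<lambda>w. eps n w $ i) = 0"
    and eps_uncorr: "\<And>n m i j. n \<ge> 2 \<Longrightarrow> m \<ge> 2 \<Longrightarrow> n \<noteq> m \<Longrightarrow>
                      prob_space.expectation M (\<lambda>w. eps n w $ i * eps m w $ j) = 0"
    and eps_cov: "\<And>n i j. n \<ge> 2 \<Longrightarrow>
                      prob_space.expectation M (\<lambda>w. eps n w $ i * eps n w $ j) = C $ i $ j"
    and tr_pos: "trace (C ** matrix_inv H) > 0"
    and th0_ne: "th0 \<noteq> matrix_inv H *v q"
    and N_pos: "N \<ge> 1"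
    and alpha_def: "\<alpha> = min (norm (th0 - matrix_inv H *v q)
                          / (sqrt (L * trace (C ** matrix_inv H)) * real N)) (1 / L)"
    and beta_def: "\<beta> = min (real N * \<alpha>) (1 / L)"
  shows "prob_space.expectation M
           (\<lambda>w. quad_obj H q (noisy_alg H (matrix_inv H *v q) \<alpha> \<beta> th0 (\<lambda>n. eps n w) N))
         - quad_obj H q (matrix_inv H *v q)
       \<le> max (5 * trace (C ** matrix_inv H) / real N)
            (max (5 * sqrt (trace (C ** matrix_inv H) * L) * norm (th0 - matrix_inv H *v q) / real N)
                 (2 * L * (norm (th0 - matrix_inv H *v q))^2 / (real N)^2))"
proof -
  interpret uncorrelated_noise M C eps
    using P eps_meas eps_L2 eps_mean eps_uncorr eps_cov
    by (simp add: uncorrelated_noise_def uncorrelated_noise_axioms_def)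
  have L: "L > 0" by (rule largest_eigenvalue_pos[OF H_pd L_max])
  have r: "norm (th0 - matrix_inv H *v q) > 0" using th0_ne by simp
  have H_ts: "H *v (matrix_inv H *v q) = q"
    by (simp add: matrix_vector_mul_assoc posdef_matrix_inv(2)[OF H_pd])
  have "0 < \<alpha>" using alpha_def L tr_pos r N_pos by simp
  moreover have "\<alpha> \<le> real N * \<alpha>" "\<alpha> \<le> 1 / L"
    using alpha_def \<open>0 < \<alpha>\<close> N_pos by simp_all
  ultimately have step: "0 < \<alpha>" "\<alpha> \<le> \<beta>" "\<beta> \<le> 1 / L"
    using beta_def by simp_all
  note expected_excess_le[OF H_sym H_pd L_max C_psd H_ts step N_pos, of th0]
  also note tuned_step_sizes_bound[OF r tr_pos L N_pos alpha_def beta_def]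
  finally show ?thesis .
qed

end
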